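(* Let $\mathcal{B}$ be a unital C$^*$-algebra. For $i=1,2$ let $\mathfrak{T}^i$ be a spatial CPD-semigroup on a set $S^i$ with values in $\mathcal{B}(\mathcal{B})$, with unit $\mathfrak{S}^i$ given by $(\mathfrak{S}^i_t)^{s,s'}(b)=(c^{i,s}_t)^*b\,c^{i,s'}_t$ for a family $(c^{i,s})_{s\in S^i}$ of continuous semigroups in $\mathcal{B}$. On the disjoint union $S=S^1\uplus S^2$ define $\mathfrak{T}=\mathfrak{T}^1\boxplus\mathfrak{T}^2$ by $\mathfrak{T}^{s,s'}_t:=(\mathfrak{T}^i_t)^{s,s'}$ for $s,s'\in S^i$ ($i=1,2$), and $\mathfrak{T}^{s_i,s_j}_t(b):=(c^{i,s_i}_t)^*b\,c^{j,s_j}_t$ for $i\neq j$, $s_i\in S^i$, $s_j\in S^j$; define $\mathfrak{S}=\mathfrak{S}^1\boxplus\mathfrak{S}^2$ by the same formulas with $\mathfrak{S}^i$ in place of $\mathfrak{T}^i$. Then $\mathfrak{T}$ is a spatial CPD-semigroup with unit $\mathfrak{S}$. Moreover, $\mathfrak{T}$ is (strongly) continuous if and only if each $\mathfrak{T}^i$ is (strongly) continuous.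
   Context: A kernel $\mathfrak{K}:S\times S\to\mathcal{B}(\mathcal{B})$ is completely positive definite (CPD) if $\sum_{i,j}b_i^*\mathfrak{K}^{s_i,s_j}(a_i^*a_j)b_j\ge0$ for all finite choices $s_i\in S$, $a_i,b_i\in\mathcal{B}$. A CPD-semigroup on $S$ is a family $(\mathfrak{T}_t)_{t\ge0}$ of $\mathcal{B}(\mathcal{B})$-valued CPD-kernels on $S$ such that each $(\mathfrak{T}^{s,s'}_t)_{t\ge0}$ is a semigroup of maps on $\mathcal{B}$; strongly continuous means $t\mapsto\mathfrak{T}^{s,s'}_t(b)$ is norm continuous for all $s,s',b$. $\mathfrak{T}$ dominates $\mathfrak{S}$ if $\mathfrak{T}_t-\mathfrak{S}_t$ is CPD for all $t$. $\mathfrak{S}$ is elementary if $\mathfrak{S}^{s,s'}_t(b)=c^{s*}_tbc^{s'}_t$ for a family of continuous semigroups $(c^s_t)_{t\ge0}$ in $\mathcal{B}$. A unit for $\mathfrak{T}$ is an elementary CPD-semigroup dominated by $\mathfrak{T}$; $\mathfrak{T}$ is spatial if it has a unit. *)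

theory Defs
  imports "HOL-Analysis.Analysis"
begin

text \<open>The complex scalar multiplication is the parameter scaleC;
  the real Banach space structure is the underlying real structure. The unit need not be
  nonzero (the zero algebra is allowed).\<close>

class unital_cstar_algebra = real_normed_algebra + monoid_mult + banach +
  fixes cstar :: "'a \<Rightarrow> 'a"
    and scaleC :: "complex \<Rightarrow> 'a \<Rightarrow> 'a"
  assumes scaleC_of_real: "scaleC (complex_of_real r) x = scaleR r x"
    and scaleC_add_left: "scaleC (\<alpha> + \<beta>) x = scaleC \<alpha> x + scaleC \<beta> x"
    and scaleC_add_right: "scaleC \<alpha> (x + y) = scaleC \<alpha> x + scaleC \<alpha> y"
    and scaleC_scaleC: "scaleC \<alpha> (scaleC \<beta> x) = scaleC (\<alpha> * \<beta>) x"
    and norm_scaleC: "norm (scaleC \<alpha> x) = cmod \<alpha> * norm x"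
    and scaleC_mult_left: "scaleC \<alpha> x * y = scaleC \<alpha> (x * y)"
    and scaleC_mult_right: "x * scaleC \<alpha> y = scaleC \<alpha> (x * y)"
    and cstar_cstar: "cstar (cstar x) = x"
    and cstar_add: "cstar (x + y) = cstar x + cstar y"
    and cstar_scaleC: "cstar (scaleC \<alpha> x) = scaleC (cnj \<alpha>) (cstar x)"
    and cstar_mult: "cstar (x * y) = cstar y * cstar x"
    and cstar_identity: "norm (cstar x * x) = (norm x)\<^sup>2"

definition positive :: "'a::unital_cstar_algebra \<Rightarrow> bool" where
  "positive b \<longleftrightarrow> (\<exists>x. b = cstar x * x)"

definition bounded_clinear_map :: "('a::unital_cstar_algebra \<Rightarrow> 'a) \<Rightarrow> bool" where
  "bounded_clinear_map f \<longleftrightarrow>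
     (\<forall>x y. f (x + y) = f x + f y) \<and> (\<forall>\<alpha> x. f (scaleC \<alpha> x) = scaleC \<alpha> (f x)) \<and>
     (\<exists>K. \<forall>x. norm (f x) \<le> K * norm x)"

definition CPD_kernel :: "('s \<Rightarrow> 's \<Rightarrow> 'a::unital_cstar_algebra \<Rightarrow> 'a) \<Rightarrow> bool" where
  "CPD_kernel K \<longleftrightarrow>
     (\<forall>s s'. bounded_clinear_map (K s s')) \<and>
     (\<forall>(n::nat) (s::nat \<Rightarrow> 's) (a::nat \<Rightarrow> 'a) (b::nat \<Rightarrow> 'a).
        positive (\<Sum>i<n. \<Sum>j<n. cstar (b i) * K (s i) (s j) (cstar (a i) * a j) * b j))"

text \<open>A CPD-semigroup: time parameter t >= 0 (values at negative times are irrelevant).\<close>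
definition CPD_semigroup :: "(real \<Rightarrow> 's \<Rightarrow> 's \<Rightarrow> 'a::unital_cstar_algebra \<Rightarrow> 'a) \<Rightarrow> bool" where
  "CPD_semigroup T \<longleftrightarrow>
     (\<forall>t\<ge>0. CPD_kernel (T t)) \<and>
     (\<forall>s s'. T 0 s s' = id) \<and>
     (\<forall>s s' t u. t \<ge> 0 \<longrightarrow> u \<ge> 0 \<longrightarrow> T (t + u) s s' = T t s s' \<circ> T u s s')"

definition strongly_continuous :: "(real \<Rightarrow> 's \<Rightarrow> 's \<Rightarrow> 'a::unital_cstar_algebra \<Rightarrow> 'a) \<Rightarrow> bool" where
  "strongly_continuous T \<longleftrightarrow> (\<forall>s s' b. continuous_on {0..} (\<lambda>t. T t s s' b))"

definition uniformly_continuous_sg :: "(real \<Rightarrow> 's \<Rightarrow> 's \<Rightarrow> 'a::unital_cstar_algebra \<Rightarrow> 'a) \<Rightarrow> bool" where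
  "uniformly_continuous_sg T \<longleftrightarrow>
     (\<forall>s s'. \<forall>t0\<ge>0. ((\<lambda>t. onorm (\<lambda>b. T t s s' b - T t0 s s' b)) \<longlongrightarrow> 0) (at t0 within {0..}))"

definition dominates :: "(real \<Rightarrow> 's \<Rightarrow> 's \<Rightarrow> 'a::unital_cstar_algebra \<Rightarrow> 'a) \<Rightarrow>
    (real \<Rightarrow> 's \<Rightarrow> 's \<Rightarrow> 'a \<Rightarrow> 'a) \<Rightarrow> bool" where
  "dominates T S \<longleftrightarrow> (\<forall>t\<ge>0. CPD_kernel (\<lambda>s s' b. T t s s' b - S t s s' b))"

definition cont_semigroup :: "(real \<Rightarrow> 'a::unital_cstar_algebra) \<Rightarrow> bool" where
  "cont_semigroup c \<longleftrightarrow> c 0 = 1 \<and> (\<forall>t u. t \<ge> 0 \<longrightarrow> u \<ge> 0 \<longrightarrow> c (t + u) = c t * c u)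
     \<and> continuous_on {0..} c"

definition elem_kernel :: "('s \<Rightarrow> real \<Rightarrow> 'a::unital_cstar_algebra) \<Rightarrow> real \<Rightarrow> 's \<Rightarrow> 's \<Rightarrow> 'a \<Rightarrow> 'a" where
  "elem_kernel c t s s' b = cstar (c s t) * b * c s' t"

definition elementary :: "(real \<Rightarrow> 's \<Rightarrow> 's \<Rightarrow> 'a::unital_cstar_algebra \<Rightarrow> 'a) \<Rightarrow> bool" where
  "elementary S \<longleftrightarrow> CPD_semigroup S \<and>
     (\<exists>c. (\<forall>s. cont_semigroup (c s)) \<and> (\<forall>t\<ge>0. S t = elem_kernel c t))"

definition is_CPD_unit :: "(real \<Rightarrow> 's \<Rightarrow> 's \<Rightarrow> 'a::unital_cstar_algebra \<Rightarrow> 'a) \<Rightarrow>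
    (real \<Rightarrow> 's \<Rightarrow> 's \<Rightarrow> 'a \<Rightarrow> 'a) \<Rightarrow> bool" where
  "is_CPD_unit T S \<longleftrightarrow> elementary S \<and> dominates T S"

definition spatial :: "(real \<Rightarrow> 's \<Rightarrow> 's \<Rightarrow> 'a::unital_cstar_algebra \<Rightarrow> 'a) \<Rightarrow> bool" where
  "spatial T \<longleftrightarrow> CPD_semigroup T \<and> (\<exists>S. is_CPD_unit T S)"

definition boxplus :: "(real \<Rightarrow> 's1 \<Rightarrow> 's1 \<Rightarrow> 'a::unital_cstar_algebra \<Rightarrow> 'a) \<Rightarrow>
    (real \<Rightarrow> 's2 \<Rightarrow> 's2 \<Rightarrow> 'a \<Rightarrow> 'a) \<Rightarrow> ('s1 \<Rightarrow> real \<Rightarrow> 'a) \<Rightarrow> ('s2 \<Rightarrow> real \<Rightarrow> 'a) \<Rightarrow>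
    real \<Rightarrow> 's1 + 's2 \<Rightarrow> 's1 + 's2 \<Rightarrow> 'a \<Rightarrow> 'a" where
  "boxplus T1 T2 c1 c2 t x y b =
     (case (x, y) of
        (Inl s, Inl s') \<Rightarrow> T1 t s s' b
      | (Inr s, Inr s') \<Rightarrow> T2 t s s' b
      | _ \<Rightarrow> cstar (case_sum c1 c2 x t) * b * case_sum c1 c2 y t)"

end

theory Submission
  imports Defs "HOL-Computational_Algebra.Formal_Power_Series"
begin

text \<open>The kernel of the sum is the elementary kernel of the combined family of semigroups
  plus the block-diagonal kernel with blocks T_i - S_i. Both summands are CPD, hence so is
  their sum, because the positive elements x*x of a C*-algebra form a cone. That cone
  property is the one piece of genuine C*-algebra theory needed; it is proved through the
  norm characterisation of positivity, using square roots given by the binomial series.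
  Semigroup law and continuity are checked entrywise: the off-diagonal entries are
  elementary, hence automatically norm continuous semigroups.\<close>

lemma cstar_zero [simp]: "cstar 0 = (0::'a::unital_cstar_algebra)"
  using cstar_add[of 0 0] by simp

lemma cstar_minus: "cstar (- x) = - cstar (x::'a::unital_cstar_algebra)"
  using cstar_add[of x "- x"] by (simp add: eq_neg_iff_add_eq_0 add.commute)

lemma cstar_diff: "cstar (x - y) = cstar x - cstar (y::'a::unital_cstar_algebra)"
  using cstar_add[of x "- y"] by (simp add: cstar_minus)

lemma cstar_scaleR: "cstar (r *\<^sub>R x) = r *\<^sub>R cstar (x::'a::unital_cstar_algebra)"
  using cstar_scaleC[of "complex_of_real r" x] by (simp add: scaleC_of_real)

lemma cstar_one [simp]: "cstar 1 = (1::'a::unital_cstar_algebra)"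
  using cstar_mult[of "cstar 1" "1::'a"] by (simp add: cstar_cstar)

lemma cstar_power: "cstar (x ^ n) = cstar (x::'a::unital_cstar_algebra) ^ n"
  by (induction n) (simp_all add: cstar_mult power_Suc2 del: power_Suc, metis power_commutes)

lemma cstar_sum: "cstar (sum f A) = (\<Sum>i\<in>A. cstar (f i::'a::unital_cstar_algebra))"
  by (induction A rule: infinite_finite_induct) (auto simp: cstar_add)

lemma scaleC_zero_right [simp]: "scaleC \<alpha> 0 = (0::'a::unital_cstar_algebra)"
  using scaleC_add_right[of \<alpha> 0 0] by simp

lemma scaleC_minus_left: "scaleC (- \<alpha>) x = - scaleC \<alpha> (x::'a::unital_cstar_algebra)"
  using scaleC_add_left[of \<alpha> "- \<alpha>" x] scaleC_of_real[of 0 x]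
  by (simp add: eq_neg_iff_add_eq_0 add.commute)

lemma scaleC_diff_right: "scaleC \<alpha> (x - y) = scaleC \<alpha> x - scaleC \<alpha> (y::'a::unital_cstar_algebra)"
  using scaleC_add_right[of \<alpha> "x - y" y] by (simp add: algebra_simps)

lemma norm_cstar [simp]: "norm (cstar x) = norm (x::'a::unital_cstar_algebra)"
proof -
  have le: "norm y \<le> norm (cstar y)" for y :: 'a
  proof (cases "y = 0")
    case False
    have "norm y * norm y \<le> norm (cstar y) * norm y"
      using cstar_identity[of y] norm_mult_ineq[of "cstar y" y] by (simp add: power2_eq_square)
    then show ?thesis using False by simp
  qed simp
  show ?thesis using le[of x] le[of "cstar x"] by (simp add: cstar_cstar)
qed

lemma norm_one_le: "norm (1::'a::unital_cstar_algebra) \<le> 1"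
proof -
  have "norm (1::'a) = (norm (1::'a))\<^sup>2" using cstar_identity[of "1::'a"] by simp
  then have "norm (1::'a) = 0 \<or> norm (1::'a) = 1" by (simp add: power2_eq_square)
  then show ?thesis by auto
qed

lemma norm_power_le: "norm (x ^ n) \<le> norm (x::'a::unital_cstar_algebra) ^ n"
proof (induction n)
  case 0 then show ?case using norm_one_le by simp
next
  case (Suc n)
  have "norm (x ^ Suc n) \<le> norm x * norm (x ^ n)" by (simp add: norm_mult_ineq)
  also have "\<dots> \<le> norm x * norm x ^ n" using Suc by (simp add: mult_left_mono)
  finally show ?case by simp
qed

lemma norm_sandwich: "norm (x * v * y) \<le> norm x * norm v * norm (y::'a::unital_cstar_algebra)"
  by (metis norm_mult_ineq mult_right_mono norm_ge_zero order_trans)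

lemma bounded_linear_cstar: "bounded_linear (cstar::'a::unital_cstar_algebra \<Rightarrow> 'a)"
  by (rule bounded_linear_intro[of _ 1]) (auto simp: cstar_add cstar_scaleR)

lemma bounded_linear_sandwich: "bounded_linear (\<lambda>v. x * v * (y::'a::unital_cstar_algebra))"
  by (rule bounded_linear_compose[OF bounded_linear_mult_left bounded_linear_mult_right])

lemma norm_self_adjoint_square:
  "cstar h = (h::'a::unital_cstar_algebra) \<Longrightarrow> norm (h * h) = (norm h)\<^sup>2"
  using cstar_identity[of h] by simp

lemma norm_self_adjoint_power_of_two:
  assumes "cstar h = (h::'a::unital_cstar_algebra)"
  shows "norm (h ^ 2 ^ k) = norm h ^ 2 ^ k"
proof (induction k)
  case (Suc k)
  have "cstar (h ^ 2 ^ k) = h ^ 2 ^ k" using assms by (simp add: cstar_power)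
  moreover have "h ^ 2 ^ Suc k = h ^ 2 ^ k * h ^ 2 ^ k" by (simp flip: power_add add: mult_2)
  ultimately show ?case using Suc by (simp add: norm_self_adjoint_square mult.commute flip: power_mult)
qed simp

lemma power_commute_of_commute:
  "z * u = u * z \<Longrightarrow> z * u ^ k = u ^ k * (z::'a::unital_cstar_algebra)"
  by (induction k) (simp_all add: mult.assoc[symmetric], simp_all add: mult.assoc)

lemma cstar_self_adjoint_plus_i:
  assumes "cstar h = h" "cstar k = (k::'a::unital_cstar_algebra)"
  shows "cstar (h + scaleC \<i> k) = h - scaleC \<i> k"
  using assms cstar_scaleC[of \<i> k] by (simp add: cstar_add scaleC_minus_left)

lemma scaleC_i_scaleC_i: "scaleC \<i> (scaleC \<i> x) = - (x::'a::unital_cstar_algebra)"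
  using scaleC_scaleC[of \<i> \<i> x] scaleC_minus_left[of 1 x] scaleC_of_real[of 1 x] by simp

lemma cstar_mult_self_adjoint_plus_i:
  assumes "cstar h = h" "cstar k = (k::'a::unital_cstar_algebra)" "h * k = k * h"
  shows "cstar (h + scaleC \<i> k) * (h + scaleC \<i> k) = h * h + k * k"
proof -
  have "cstar (h + scaleC \<i> k) * (h + scaleC \<i> k)
      = h * h + (scaleC \<i> (h * k) - scaleC \<i> (k * h)) - scaleC \<i> (scaleC \<i> (k * k))"
    using assms
    by (simp add: cstar_self_adjoint_plus_i algebra_simps scaleC_mult_left scaleC_mult_right
        scaleC_diff_right)
  then show ?thesis using assms(3) by (simp add: scaleC_i_scaleC_i)
qed

section \<open>Square roots from the binomial series\<close>

definition sqrt_coeff :: "nat \<Rightarrow> real" where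
  "sqrt_coeff k = (-1) ^ k * ((1/2) gchoose k)"

lemma sqrt_coeff_0 [simp]: "sqrt_coeff 0 = 1"
  by (simp add: sqrt_coeff_def)

lemma gbinomial_Suc_eq: "(a::real) gchoose Suc k = (a gchoose k) * (a - real k) / real (Suc k)"
  using gbinomial_mult_1[of a k] by (simp add: field_simps)

lemma sqrt_coeff_Suc: "sqrt_coeff (Suc k) = sqrt_coeff k * (real k - 1/2) / real (Suc k)"
  by (simp add: sqrt_coeff_def gbinomial_Suc_eq field_simps)

lemma sqrt_coeff_Suc_nonpos: "sqrt_coeff (Suc k) \<le> 0"
proof (induction k)
  case (Suc k)
  then show ?case
    by (subst sqrt_coeff_Suc) (simp add: divide_nonpos_pos mult_nonpos_nonneg)
qed (simp add: sqrt_coeff_Suc)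

lemma sum_sqrt_coeff_nonneg: "0 \<le> (\<Sum>k\<le>m. sqrt_coeff k)"
proof -
  have "0 \<le> (-1::real) ^ m * ((-1/2) gchoose m)" for m
  proof (induction m)
    case (Suc m)
    have "(-1::real) ^ Suc m * ((-1/2) gchoose Suc m)
        = ((-1) ^ m * ((-1/2) gchoose m)) * (real m + 1/2) / real (Suc m)"
      by (simp add: gbinomial_Suc_eq field_simps)
    then show ?case using Suc by simp
  qed simp
  moreover have "(\<Sum>k\<le>m. sqrt_coeff k) = (-1) ^ m * ((1/2 - 1::real) gchoose m)"
    using gbinomial_sum_lower_neg[of "1/2::real" m] by (simp add: sqrt_coeff_def mult.commute)
  ultimately show ?thesis by simp
qed

lemma sum_abs_sqrt_coeff_Suc_le: "(\<Sum>k<n. \<bar>sqrt_coeff (Suc k)\<bar>) \<le> 1"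
proof -
  have "(\<Sum>k<n. \<bar>sqrt_coeff (Suc k)\<bar>) = - (\<Sum>k<n. sqrt_coeff (Suc k))"
    using sqrt_coeff_Suc_nonpos by (simp add: sum_negf[symmetric])
  also have "\<dots> = 1 - (\<Sum>k\<le>n. sqrt_coeff k)"
    by (simp add: sum.atMost_shift)
  finally show ?thesis using sum_sqrt_coeff_nonneg[of n] by linarith
qed

lemma summable_abs_sqrt_coeff_Suc: "summable (\<lambda>k. \<bar>sqrt_coeff (Suc k)\<bar>)"
  by (rule summableI_nonneg_bounded[OF _ sum_abs_sqrt_coeff_Suc_le]) simp

lemma summable_abs_sqrt_coeff: "summable (\<lambda>k. \<bar>sqrt_coeff k\<bar>)"
  using summable_abs_sqrt_coeff_Suc summable_Suc_iff[of "\<lambda>k. \<bar>sqrt_coeff k\<bar>"] by simp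

lemma suminf_abs_sqrt_coeff_Suc_le: "(\<Sum>k. \<bar>sqrt_coeff (Suc k)\<bar>) \<le> 1"
  by (rule suminf_le_const[OF summable_abs_sqrt_coeff_Suc sum_abs_sqrt_coeff_Suc_le])

text \<open>The Cauchy square of the series is the series of 1 - z.\<close>

lemma sqrt_coeff_convolution:
  "(\<Sum>i\<le>n. sqrt_coeff i * sqrt_coeff (n - i)) = (-1) ^ n * real (1 choose n)"
proof -
  have "(\<Sum>i\<le>n. sqrt_coeff i * sqrt_coeff (n - i))
      = (-1) ^ n * (\<Sum>i\<le>n. ((1/2::real) gchoose i) * ((1/2) gchoose (n - i)))"
    unfolding sum_distrib_left
  proof (rule sum.cong)
    fix i assume "i \<in> {..n}"
    then have "(-1::real) ^ i * (-1) ^ (n - i) = (-1) ^ n" by (simp flip: power_add)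
    then show "sqrt_coeff i * sqrt_coeff (n - i)
        = (-1) ^ n * (((1/2::real) gchoose i) * ((1/2) gchoose (n - i)))"
    proof -
      have "sqrt_coeff i * sqrt_coeff (n - i)
          = ((-1) ^ i * (-1) ^ (n - i)) * (((1/2::real) gchoose i) * ((1/2) gchoose (n - i)))"
        unfolding sqrt_coeff_def by (simp only: mult_ac)
      with \<open>(-1::real) ^ i * (-1) ^ (n - i) = (-1) ^ n\<close> show ?thesis by simp
    qed
  qed simp
  also have "(\<Sum>i\<le>n. ((1/2::real) gchoose i) * ((1/2) gchoose (n - i))) = 1 gchoose n"
    using gbinomial_Vandermonde[of "1/2::real" "1/2" n] by (simp add: atMost_atLeast0)
  finally show ?thesis using binomial_gbinomial[of 1 n, where 'a=real] by simp
qed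

lemma self_adjoint_sqrt_near_one:
  fixes p :: "'a::unital_cstar_algebra"
  assumes sa: "cstar p = p" and near: "norm (1 - p) \<le> 1"
  obtains r where "cstar r = r" "r * r = p" "norm (1 - r) \<le> 1"
    "\<And>z. z * p = p * z \<Longrightarrow> z * r = r * z"
proof -
  define u where "u = 1 - p"
  have sau: "cstar u = u" using sa by (simp add: u_def cstar_diff)
  have "norm (u ^ k) \<le> 1" for k
    using norm_power_le[of u k] near power_le_one[of "norm u" k] by (simp add: u_def)
  then have norm_f: "norm (sqrt_coeff k *\<^sub>R u ^ k) \<le> \<bar>sqrt_coeff k\<bar>" for k
    by (simp add: mult_left_le)
  define f where "f k = sqrt_coeff k *\<^sub>R u ^ k" for k
  have snf: "summable (\<lambda>k. norm (f k))"
    by (rule summable_comparison_test[OF _ summable_abs_sqrt_coeff]) (use norm_f f_def in auto)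
  then have sf: "summable f" by (rule summable_norm_cancel)
  define r where "r = suminf f"
  have "cstar r = (\<Sum>k. cstar (f k))"
    unfolding r_def by (rule bounded_linear.suminf[OF bounded_linear_cstar sf])
  also have "(\<lambda>k. cstar (f k)) = f"
    by (rule ext) (simp add: f_def cstar_scaleR cstar_power sau)
  finally have "cstar r = r" by (simp add: r_def)
  moreover have "r * r = p"
  proof -
    have "f i * f (n - i) = (sqrt_coeff i * sqrt_coeff (n - i)) *\<^sub>R u ^ n" if "i \<le> n" for i n
      using that by (simp add: f_def flip: power_add)
    then have "(\<Sum>i\<le>n. f i * f (n - i)) = ((-1) ^ n * real (1 choose n)) *\<^sub>R u ^ n" for n
      by (simp add: scaleR_sum_left[symmetric] sqrt_coeff_convolution)
    moreover have "(\<lambda>n. ((-1) ^ n * real (1 choose n)) *\<^sub>R u ^ n) sums (1 - u)"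
      using sums_finite[of "{0,1}" "\<lambda>n. ((-1) ^ n * real (1 choose n)) *\<^sub>R u ^ n"]
      by (simp add: binomial_eq_0)
    ultimately show ?thesis
      using Cauchy_product[OF snf snf] by (simp add: r_def u_def sums_iff)
  qed
  moreover have "norm (1 - r) \<le> 1"
  proof -
    have "1 - r = - (\<Sum>k. f (Suc k))"
      using suminf_split_head[OF sf] by (simp add: r_def f_def)
    moreover have "norm (\<Sum>k. f (Suc k)) \<le> (\<Sum>k. \<bar>sqrt_coeff (Suc k)\<bar>)"
      by (rule norm_suminf_le[OF _ summable_abs_sqrt_coeff_Suc]) (unfold f_def, rule norm_f)
    ultimately have "norm (1 - r) \<le> (\<Sum>k. \<bar>sqrt_coeff (Suc k)\<bar>)" by simp
    then show ?thesis using suminf_abs_sqrt_coeff_Suc_le by linarith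
  qed
  moreover have "z * r = r * z" if "z * p = p * z" for z
  proof -
    have "z * u = u * z" using that by (simp add: u_def algebra_simps)
    then have "(\<lambda>k. z * f k) = (\<lambda>k. f k * z)"
      by (simp add: f_def power_commute_of_commute)
    then show ?thesis
      unfolding r_def using bounded_linear.suminf[OF bounded_linear_mult_right sf, of z]
        bounded_linear.suminf[OF bounded_linear_mult_left sf, of z] by simp
  qed
  ultimately show ?thesis using that by blast
qed

section \<open>Positivity and sums of positive elements\<close>

text \<open>Unlike positive, this norm description of positivity is visibly closed under sums;
  the work is to show that the two notions agree.\<close>

definition norm_positive :: "'a::unital_cstar_algebra \<Rightarrow> bool" where
  "norm_positive a \<longleftrightarrow> cstar a = a \<and> (\<exists>t\<ge>0. norm (t *\<^sub>R 1 - a) \<le> t)"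

lemma norm_positive_0: "norm_positive (0::'a::unital_cstar_algebra)"
  unfolding norm_positive_def by auto

lemma norm_positive_add:
  assumes "norm_positive a" "norm_positive (b::'a::unital_cstar_algebra)"
  shows "norm_positive (a + b)"
proof -
  obtain s t where "s \<ge> 0" "norm (s *\<^sub>R 1 - a) \<le> s" "t \<ge> 0" "norm (t *\<^sub>R 1 - b) \<le> t"
    using assms unfolding norm_positive_def by blast
  moreover have "(s + t) *\<^sub>R 1 - (a + b) = (s *\<^sub>R 1 - a) + (t *\<^sub>R 1 - b)"
    by (simp add: algebra_simps)
  ultimately have "norm ((s + t) *\<^sub>R 1 - (a + b)) \<le> s + t"
    by (metis add_mono norm_triangle_ineq order_trans)
  then show ?thesis using assms \<open>s \<ge> 0\<close> \<open>t \<ge> 0\<close>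
    unfolding norm_positive_def by (intro conjI exI[of _ "s + t"]) (auto simp: cstar_add)
qed

lemma norm_positive_scaleR:
  assumes "norm_positive (a::'a::unital_cstar_algebra)" "r \<ge> 0"
  shows "norm_positive (r *\<^sub>R a)"
proof -
  obtain t where "t \<ge> 0" "norm (t *\<^sub>R 1 - a) \<le> t"
    using assms(1) unfolding norm_positive_def by blast
  moreover have "(r * t) *\<^sub>R 1 - r *\<^sub>R a = r *\<^sub>R (t *\<^sub>R 1 - a)" by (simp add: algebra_simps)
  ultimately have "norm ((r * t) *\<^sub>R 1 - r *\<^sub>R a) \<le> r * t"
    using assms(2) by (simp add: mult_left_mono)
  then show ?thesis using assms \<open>t \<ge> 0\<close> unfolding norm_positive_def
    by (intro conjI exI[of _ "r * t"]) (auto simp: cstar_scaleR)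
qed

lemma norm_positive_sqrt:
  assumes "norm_positive (a::'a::unital_cstar_algebra)"
  obtains r where "cstar r = r" "r * r = a" "norm_positive r"
    "\<And>z. z * a = a * z \<Longrightarrow> z * r = r * z"
proof -
  obtain t where t: "t \<ge> 0" "norm (t *\<^sub>R 1 - a) \<le> t" and sa: "cstar a = a"
    using assms unfolding norm_positive_def by blast
  show ?thesis
  proof (cases "t = 0")
    case True
    then show ?thesis using t norm_positive_0 that[of 0] by simp
  next
    case False
    then have tp: "t > 0" using t by simp
    define p where "p = (1/t) *\<^sub>R a"
    have "1 - p = (1/t) *\<^sub>R (t *\<^sub>R 1 - a)" using tp by (simp add: p_def algebra_simps)
    then have "norm (1 - p) \<le> 1" using t tp by (simp add: divide_le_eq_1)
    moreover have "cstar p = p" using sa by (simp add: p_def cstar_scaleR)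
    ultimately obtain r0 where r0: "cstar r0 = r0" "r0 * r0 = p" "norm (1 - r0) \<le> 1"
      "\<And>z. z * p = p * z \<Longrightarrow> z * r0 = r0 * z"
      using self_adjoint_sqrt_near_one by blast
    define r where "r = sqrt t *\<^sub>R r0"
    have "r * r = a" using r0(2) tp by (simp add: r_def p_def)
    moreover have "norm (sqrt t *\<^sub>R 1 - r) \<le> sqrt t"
      using r0(3) tp by (simp add: r_def mult_left_le flip: scaleR_diff_right)
    then have "norm_positive r"
      using r0(1) tp unfolding norm_positive_def
      by (intro conjI exI[of _ "sqrt t"]) (auto simp: r_def cstar_scaleR)
    moreover have "z * r = r * z" if "z * a = a * z" for z
      using r0(4)[of z] that by (simp add: r_def p_def)
    ultimately show ?thesis using that[of r] r0(1) by (simp add: r_def cstar_scaleR)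
  qed
qed

text \<open>If \<open>\<parallel>h\<parallel> \<le> 1\<close> then \<open>u = h + i sqrt(1 - h h)\<close> is unitary, so its imaginary part
  \<open>sqrt(1 - h h)\<close> has norm at most one.\<close>

lemma norm_one_minus_self_adjoint_square_le:
  fixes h :: "'a::unital_cstar_algebra"
  assumes sa: "cstar h = h" and nh: "norm h \<le> 1"
  shows "norm (1 - h * h) \<le> 1"
proof -
  have "norm (1 - (1 - h * h)) \<le> 1"
    using nh by (simp add: norm_self_adjoint_square[OF sa] power_le_one)
  moreover have "cstar (1 - h * h) = 1 - h * h" using sa by (simp add: cstar_diff cstar_mult)
  ultimately obtain b where b: "cstar b = b" "b * b = 1 - h * h"
    "\<And>z. z * (1 - h * h) = (1 - h * h) * z \<Longrightarrow> z * b = b * z"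
    using self_adjoint_sqrt_near_one by blast
  have hb: "h * b = b * h" by (rule b(3)) (simp add: algebra_simps mult.assoc)
  define u where "u = h + scaleC \<i> b"
  have "cstar u * u = 1" using cstar_mult_self_adjoint_plus_i[OF sa b(1) hb] b(2) by (simp add: u_def)
  then have "(norm u)\<^sup>2 \<le> 1" using cstar_identity[of u] norm_one_le[where 'a='a] by simp
  then have "norm u \<le> 1" by (simp add: power_le_one_iff)
  moreover have "u - cstar u = 2 *\<^sub>R scaleC \<i> b"
    unfolding scaleR_2 by (simp add: u_def cstar_self_adjoint_plus_i[OF sa b(1)])
  then have "2 * norm b \<le> norm u + norm u"
    using norm_triangle_ineq4[of u "cstar u"] norm_scaleC[of \<i> b] by simp
  ultimately have "norm b \<le> 1" by simp
  then show ?thesis using norm_self_adjoint_square[OF b(1)] b(2) by (simp add: power_le_one)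
qed

lemma norm_positive_self_adjoint_square:
  assumes sa: "cstar h = (h::'a::unital_cstar_algebra)"
  shows "norm_positive (h * h)"
proof (cases "h = 0")
  case False
  define m where "m = norm h"
  have mp: "m > 0" using False by (simp add: m_def)
  define h' where "h' = (1/m) *\<^sub>R h"
  have "norm (1 - h' * h') \<le> 1"
    using sa mp by (intro norm_one_minus_self_adjoint_square_le) (simp_all add: h'_def m_def cstar_scaleR)
  moreover have "(m * m) *\<^sub>R 1 - h * h = (m * m) *\<^sub>R (1 - h' * h')"
    using mp by (simp add: h'_def algebra_simps)
  ultimately have "norm ((m * m) *\<^sub>R 1 - h * h) \<le> m * m"
    using mp by (simp add: mult_left_le)
  then show ?thesis
    using sa mp unfolding norm_positive_def by (intro conjI exI[of _ "m * m"]) (auto simp: cstar_mult)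
qed (simp add: norm_positive_0)

lemma norm_positive_antisym:
  assumes "norm_positive b" "norm_positive (- b::'a::unital_cstar_algebra)"
  shows "b = 0"
proof -
  obtain s where s: "cstar s = s" "s * s = b" "\<And>z. z * b = b * z \<Longrightarrow> z * s = s * z"
    using norm_positive_sqrt[OF assms(1)] by blast
  obtain r where r: "cstar r = r" "r * r = - b" "\<And>z. z * (- b) = (- b) * z \<Longrightarrow> z * r = r * z"
    using norm_positive_sqrt[OF assms(2)] by blast
  have "b = - (r * r)" using r(2) by simp
  then have "r * s = s * r" by (intro s(3)) (simp add: mult.assoc)
  define z where "z = r + scaleC \<i> s"
  have "cstar z * z = 0"
    using cstar_mult_self_adjoint_plus_i[OF r(1) s(1) \<open>r * s = s * r\<close>] r(2) s(2) by (simp add: z_def)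
  then have "z = 0" using cstar_identity[of z] by simp
  then have "2 *\<^sub>R r = 0"
    unfolding scaleR_2 using cstar_self_adjoint_plus_i[OF r(1) s(1)] by (simp add: z_def)
  then have "r = 0" by simp
  then show ?thesis using r(2) by simp
qed

lemma le_of_power_of_two_growth:
  fixes G t M :: real
  assumes "0 \<le> t" "0 \<le> M"
    and growth: "\<And>k. G ^ 2 ^ k \<le> t ^ 2 ^ k + real (2 ^ k) * M * t ^ (2 ^ k - 1)"
  shows "G \<le> t"
proof (rule ccontr)
  assume "\<not> G \<le> t"
  define d where "d = G / t - 1"
  show False
  proof (cases "t = 0")
    case True
    then show False using growth[of 1] \<open>\<not> G \<le> t\<close> by simp
  next
    case False
    then have tp: "t > 0" using assms(1) by simp
    then have dp: "d > 0" using \<open>\<not> G \<le> t\<close> by (simp add: d_def field_simps)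
    define C where "C = M / t"
    have "(G / t) ^ 2 ^ k \<le> 1 + real (2 ^ k) * C" for k
    proof -
      have "t ^ 2 ^ k = t ^ (2 ^ k - 1) * t" by (simp flip: power_Suc2)
      then show ?thesis
        using divide_right_mono[OF growth[of k], of "t ^ 2 ^ k"] tp
        by (simp add: C_def power_divide add_divide_distrib)
    qed
    obtain n :: nat where n: "2 * C / d\<^sup>2 < real n" using reals_Archimedean2 by blast
    define N :: nat where "N = 2 ^ n"
    have Npos: "real N > 0" by (simp add: N_def)
    have "real n < real N" by (simp add: N_def less_exp)
    then have "2 * C / d\<^sup>2 < real N" using n by linarith
    then have NC: "2 * C < real N * d\<^sup>2" using dp by (simp add: divide_less_eq)
    have "(1 + real N * d)\<^sup>2 \<le> ((G / t) ^ N)\<^sup>2"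
      using Bernoulli_inequality[of d N] dp by (intro power_mono) (simp_all add: d_def)
    also have "\<dots> = (G / t) ^ 2 ^ Suc n" by (simp add: N_def mult.commute flip: power_mult)
    also have "\<dots> \<le> 1 + 2 * real N * C"
      using \<open>\<And>k. (G / t) ^ 2 ^ k \<le> _\<close>[of "Suc n"] by (simp add: N_def)
    finally have "(1 + real N * d)\<^sup>2 \<le> 1 + 2 * real N * C" .
    moreover have "(1 + real N * d)\<^sup>2 = 1 + 2 * real N * d + real N * (real N * d\<^sup>2)"
      by (simp add: power2_eq_square algebra_simps)
    moreover have "real N * (2 * C) < real N * (real N * d\<^sup>2)"
      using NC Npos by (intro mult_strict_left_mono)
    moreover have "0 < 2 * real N * d" using Npos dp by simp
    ultimately show False by linarith
  qed
qed

lemma norm_power_perturbation_le: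
  fixes g g' y z :: "'a::unital_cstar_algebra"
  assumes g: "g = t *\<^sub>R 1 + y * z" and intertwine: "g * y = y * g'"
    and "norm g' \<le> t" "0 \<le> t"
  shows "norm (g ^ n) \<le> t ^ n + real n * (norm y * norm z) * t ^ (n - 1)"
proof (induction n)
  case 0
  then show ?case using norm_one_le[where 'a='a] by simp
next
  case (Suc n)
  have "g ^ n * y = y * g' ^ n"
  proof (induction n)
    case (Suc n)
    have "g ^ Suc n * y = g * (g ^ n * y)" by (simp add: mult.assoc)
    also have "\<dots> = y * g' ^ Suc n" by (simp add: Suc intertwine flip: mult.assoc)
    finally show ?case .
  qed simp
  have "g ^ Suc n = g ^ n * (t *\<^sub>R 1 + y * z)" by (simp only: power_Suc2 flip: g)
  then have "g ^ Suc n = t *\<^sub>R g ^ n + (g ^ n * y) * z"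
    by (simp add: distrib_left mult.assoc)
  then have "g ^ Suc n = t *\<^sub>R g ^ n + y * g' ^ n * z"
    by (simp add: \<open>g ^ n * y = y * g' ^ n\<close>)
  then have "norm (g ^ Suc n) \<le> t * norm (g ^ n) + norm y * norm (g' ^ n) * norm z"
    using norm_triangle_ineq[of "t *\<^sub>R g ^ n" "y * g' ^ n * z"] norm_sandwich[of y "g' ^ n" z]
      \<open>0 \<le> t\<close> by simp
  also have "norm (g' ^ n) \<le> t ^ n"
    using norm_power_le[of g' n] power_mono[OF \<open>norm g' \<le> t\<close>, of n] by simp
  then have "norm y * norm (g' ^ n) * norm z \<le> norm y * norm z * t ^ n"
    by (simp add: mult_left_mono mult_right_mono mult.commute mult.left_commute)
  then have "t * norm (g ^ n) + norm y * norm (g' ^ n) * norm z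
      \<le> t * (t ^ n + real n * (norm y * norm z) * t ^ (n - 1)) + norm y * norm z * t ^ n"
    using Suc \<open>0 \<le> t\<close> by (intro add_mono mult_left_mono) auto
  also have "\<dots> = t ^ Suc n + real (Suc n) * (norm y * norm z) * t ^ (Suc n - 1)"
    by (cases n) (simp_all add: algebra_simps)
  finally show ?case .
qed

text \<open>The nonzero spectra of y*y and yy* coincide.\<close>

lemma norm_positive_neg_mult_cstar:
  fixes y :: "'a::unital_cstar_algebra"
  assumes "norm_positive (- (cstar y * y))"
  shows "norm_positive (- (y * cstar y))"
proof -
  obtain t where "t \<ge> 0" and bound: "norm (t *\<^sub>R 1 + cstar y * y) \<le> t"
    using assms unfolding norm_positive_def by auto
  define g where "g = t *\<^sub>R 1 + y * cstar y"
  have sa: "cstar g = g" by (simp add: g_def cstar_add cstar_scaleR cstar_mult cstar_cstar)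
  have "g * y = y * (t *\<^sub>R 1 + cstar y * y)" by (simp add: g_def distrib_left distrib_right mult.assoc)
  then have powers: "norm (g ^ n) \<le> t ^ n + real n * (norm y * norm (cstar y)) * t ^ (n - 1)" for n
    using g_def bound \<open>t \<ge> 0\<close> by (intro norm_power_perturbation_le)
  have growth: "norm g ^ 2 ^ k \<le> t ^ 2 ^ k + real (2 ^ k) * (norm y * norm y) * t ^ (2 ^ k - 1)" for k
    using norm_self_adjoint_power_of_two[OF sa, of k] powers[of "2 ^ k"] by simp
  have "norm g \<le> t" by (rule le_of_power_of_two_growth[OF \<open>t \<ge> 0\<close> _ growth]) simp
  then show ?thesis
    using \<open>t \<ge> 0\<close> unfolding norm_positive_def g_def
    by (auto simp: cstar_minus cstar_mult cstar_cstar)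
qed

lemma norm_positive_mult_cstar_add_cstar_mult:
  fixes y :: "'a::unital_cstar_algebra"
  shows "norm_positive (y * cstar y + cstar y * y)"
proof -
  define h where "h = y + cstar y"
  define k where "k = scaleC \<i> (cstar y - y)"
  have "cstar h = h" by (simp add: h_def cstar_add cstar_cstar add.commute)
  moreover have "cstar k = k"
    using cstar_scaleC[of \<i> "cstar y - y"]
    by (simp add: k_def cstar_diff cstar_cstar scaleC_minus_left scaleC_diff_right)
  moreover have "k * k = - ((cstar y - y) * (cstar y - y))"
    by (simp add: k_def scaleC_mult_left scaleC_mult_right scaleC_i_scaleC_i)
  then have "h * h + k * k = 2 *\<^sub>R (y * cstar y + cstar y * y)"
    by (simp add: h_def algebra_simps scaleR_2)
  moreover have "norm_positive (h * h + k * k)"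
    using calculation by (intro norm_positive_add norm_positive_self_adjoint_square)
  ultimately show ?thesis using norm_positive_scaleR[of "h * h + k * k" "1/2"] by simp
qed

lemma eq_0_of_norm_positive_neg_cstar_mult:
  fixes y :: "'a::unital_cstar_algebra"
  assumes "norm_positive (- (cstar y * y))"
  shows "y = 0"
proof -
  have "y * cstar y = (y * cstar y + cstar y * y) + - (cstar y * y)" by simp
  then have "norm_positive (y * cstar y)"
    using norm_positive_add[OF norm_positive_mult_cstar_add_cstar_mult[of y] assms] by simp
  then have "y * cstar y = 0"
    using norm_positive_neg_mult_cstar[OF assms] by (rule norm_positive_antisym)
  then show "y = 0"
    using cstar_identity[of "cstar y"] by (simp add: cstar_cstar)
qed

lemma self_adjoint_cube_eq_0:
  fixes d :: "'a::unital_cstar_algebra"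
  assumes "cstar d = d" "d * d * d = 0"
  shows "d = 0"
proof -
  have "(d * d) * (d * d) = 0" using assms(2) by (simp flip: mult.assoc)
  then have "norm (d * d) = 0"
    using norm_self_adjoint_square[of "d * d"] assms(1) by (simp add: cstar_mult)
  then show ?thesis using norm_self_adjoint_square[OF assms(1)] by simp
qed

text \<open>Positivity of x*x (Fukamiya, Kelley--Vaught). With a = x*x and c = |a|, the element
  d = c - a satisfies d a = -d c, so that y = x d has y*y = -(w d)(w d) for w = sqrt c;
  hence y = 0, which forces d d d = 0 and so a = c.\<close>

lemma norm_positive_cstar_mult: "norm_positive (cstar x * (x::'a::unital_cstar_algebra))"
proof -
  define a where "a = cstar x * x"
  have sa_a: "cstar a = a" by (simp add: a_def cstar_mult cstar_cstar)
  obtain c where c: "cstar c = c" "c * c = a * a" "norm_positive c"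
    "\<And>z. z * (a * a) = (a * a) * z \<Longrightarrow> z * c = c * z"
    using norm_positive_sqrt[OF norm_positive_self_adjoint_square[OF sa_a]] by blast
  have ac: "a * c = c * a" by (rule c(4)) (simp add: mult.assoc)
  obtain w where w: "cstar w = w" "w * w = c" "\<And>z. z * c = c * z \<Longrightarrow> z * w = w * z"
    using norm_positive_sqrt[OF c(3)] by blast
  define d where "d = c - a"
  have sa_d: "cstar d = d" using c(1) sa_a by (simp add: d_def cstar_diff)
  have dc: "d * c = c * d" using ac by (simp add: d_def algebra_simps)
  have dw: "d * w = w * d" using dc by (rule w(3))
  have da: "d * a = - (d * c)"
  proof -
    have "d * (c + a) = c * c - a * a" using ac by (simp add: d_def algebra_simps)
    then show ?thesis using c(2) by (simp add: distrib_left eq_neg_iff_add_eq_0 add.commute)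
  qed
  have dad: "d * a * d = - (c * d * d)" by (simp add: da dc flip: mult.assoc)
  have "cstar (w * d) = w * d" by (simp add: cstar_mult w(1) sa_d dw)
  moreover have "(w * d) * (w * d) = c * d * d"
    by (metis dw mult.assoc w(2))
  moreover have "cstar (x * d) * (x * d) = d * a * d"
    by (simp add: a_def cstar_mult sa_d mult.assoc)
  ultimately have "norm_positive (- (cstar (x * d) * (x * d)))"
    using norm_positive_self_adjoint_square[of "w * d"] dad by simp
  then have "x * d = 0" by (rule eq_0_of_norm_positive_neg_cstar_mult)
  then have "c * d * d = 0"
    using \<open>cstar (x * d) * (x * d) = d * a * d\<close> dad by simp
  moreover have "d * d * d = d * d * c - d * (d * a)" by (simp add: d_def algebra_simps)
  moreover have "d * d * c = c * d * d" by (metis dc mult.assoc)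
  ultimately have "d * d * d = 0" by (simp add: da dc flip: mult.assoc)
  then have "d = 0" using self_adjoint_cube_eq_0[OF sa_d] by simp
  then show ?thesis using c(3) by (simp add: a_def d_def)
qed

lemma positive_iff_norm_positive: "positive (a::'a::unital_cstar_algebra) \<longleftrightarrow> norm_positive a"
proof
  assume "positive a"
  then show "norm_positive a" unfolding positive_def using norm_positive_cstar_mult by blast
next
  assume "norm_positive a"
  then obtain r where "cstar r = r" "r * r = a" by (rule norm_positive_sqrt)
  then show "positive a" unfolding positive_def by metis
qed

lemma positive_add: "positive a \<Longrightarrow> positive b \<Longrightarrow> positive (a + (b::'a::unital_cstar_algebra))"
  by (simp add: positive_iff_norm_positive norm_positive_add)

section \<open>CPD-kernels\<close>

lemma bounded_clinear_map_sandwich: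
  "bounded_clinear_map (\<lambda>v. x * v * (y::'a::unital_cstar_algebra))"
  unfolding bounded_clinear_map_def
proof (intro conjI allI exI)
  fix v w show "x * (v + w) * y = x * v * y + x * w * y" by (simp add: distrib_left distrib_right)
next
  fix \<alpha> v show "x * scaleC \<alpha> v * y = scaleC \<alpha> (x * v * y)"
    by (simp add: scaleC_mult_left scaleC_mult_right)
next
  fix v show "norm (x * v * y) \<le> norm x * norm y * norm v"
    using norm_sandwich[of x v y] by (simp add: mult.commute mult.left_commute)
qed

lemma bounded_clinear_map_zero: "bounded_clinear_map (\<lambda>v. 0::'a::unital_cstar_algebra)"
  unfolding bounded_clinear_map_def by (auto intro: exI[of _ 0])

lemma bounded_clinear_map_add:
  assumes "bounded_clinear_map f" "bounded_clinear_map (g::'a::unital_cstar_algebra \<Rightarrow> 'a)"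
  shows "bounded_clinear_map (\<lambda>v. f v + g v)"
proof -
  obtain K L where K: "\<forall>x. norm (f x) \<le> K * norm x" and L: "\<forall>x. norm (g x) \<le> L * norm x"
    using assms unfolding bounded_clinear_map_def by blast
  have "norm (f x + g x) \<le> (K + L) * norm x" for x
    using norm_triangle_ineq[of "f x" "g x"] K L by (simp add: distrib_right) (smt (verit))
  then have "\<forall>x. norm (f x + g x) \<le> (K + L) * norm x" by blast
  moreover have "\<forall>x y. f (x + y) + g (x + y) = (f x + g x) + (f y + g y)"
    using assms unfolding bounded_clinear_map_def by (simp add: ac_simps)
  moreover have "\<forall>\<alpha> x. f (scaleC \<alpha> x) + g (scaleC \<alpha> x) = scaleC \<alpha> (f x + g x)"
    using assms unfolding bounded_clinear_map_def by (simp add: scaleC_add_right)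
  ultimately show ?thesis unfolding bounded_clinear_map_def by blast
qed
lemma CPD_kernel_elem_kernel:
  "CPD_kernel (elem_kernel c t :: 's \<Rightarrow> 's \<Rightarrow> 'a::unital_cstar_algebra \<Rightarrow> 'a)"
  unfolding CPD_kernel_def
proof (intro conjI allI)
  fix s s'
  show "bounded_clinear_map (elem_kernel c t s s')"
    unfolding elem_kernel_def[abs_def] by (rule bounded_clinear_map_sandwich)
next
  fix n :: nat and s :: "nat \<Rightarrow> 's" and a b :: "nat \<Rightarrow> 'a"
  define y where "y = (\<Sum>j<n. a j * c (s j) t * b j)"
  have "cstar y * y = (\<Sum>i<n. cstar (b i) * cstar (c (s i) t) * cstar (a i)) * y"
    by (simp add: y_def cstar_sum cstar_mult mult.assoc)
  also have "\<dots> = (\<Sum>i<n. \<Sum>j<n. cstar (b i) * cstar (c (s i) t) * cstar (a i) * (a j * c (s j) t * b j))"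
    unfolding y_def by (rule sum_product)
  also have "\<dots> = (\<Sum>i<n. \<Sum>j<n. cstar (b i) * elem_kernel c t (s i) (s j) (cstar (a i) * a j) * b j)"
    by (simp add: elem_kernel_def mult.assoc)
  finally show "positive (\<Sum>i<n. \<Sum>j<n. cstar (b i) * elem_kernel c t (s i) (s j) (cstar (a i) * a j) * b j)"
    unfolding positive_def by metis
qed

lemma CPD_kernel_add:
  assumes "CPD_kernel K" "CPD_kernel (L :: 's \<Rightarrow> 's \<Rightarrow> 'a::unital_cstar_algebra \<Rightarrow> 'a)"
  shows "CPD_kernel (\<lambda>x y v. K x y v + L x y v)"
  unfolding CPD_kernel_def
proof (intro conjI allI)
  fix s s'
  show "bounded_clinear_map (\<lambda>v. K s s' v + L s s' v)"
    using assms unfolding CPD_kernel_def by (intro bounded_clinear_map_add) auto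
next
  fix n :: nat and s :: "nat \<Rightarrow> 's" and a b :: "nat \<Rightarrow> 'a"
  let ?Q = "\<lambda>M. \<Sum>i<n. \<Sum>j<n. cstar (b i) * M (s i) (s j) (cstar (a i) * a j) * b j"
  have "?Q (\<lambda>x y v. K x y v + L x y v) = ?Q K + ?Q L"
    by (simp add: distrib_left distrib_right sum.distrib)
  then show "positive (?Q (\<lambda>x y v. K x y v + L x y v))"
    using assms unfolding CPD_kernel_def by (simp add: positive_add)
qed

definition block_kernel :: "('s1 \<Rightarrow> 's1 \<Rightarrow> 'a::unital_cstar_algebra \<Rightarrow> 'a) \<Rightarrow>
    ('s2 \<Rightarrow> 's2 \<Rightarrow> 'a \<Rightarrow> 'a) \<Rightarrow> 's1 + 's2 \<Rightarrow> 's1 + 's2 \<Rightarrow> 'a \<Rightarrow> 'a" where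
  "block_kernel K1 K2 x y v =
     (case (x, y) of (Inl s, Inl s') \<Rightarrow> K1 s s' v | (Inr s, Inr s') \<Rightarrow> K2 s s' v | _ \<Rightarrow> 0)"

text \<open>The quadratic form of a block kernel splits into those of the blocks, evaluated at
  the families b restricted (by zero) to each summand.\<close>

lemma CPD_kernel_block_kernel:
  fixes K1 :: "'s1 \<Rightarrow> 's1 \<Rightarrow> 'a::unital_cstar_algebra \<Rightarrow> 'a" and K2 :: "'s2 \<Rightarrow> 's2 \<Rightarrow> 'a \<Rightarrow> 'a"
  assumes K1: "CPD_kernel K1" and K2: "CPD_kernel K2"
  shows "CPD_kernel (block_kernel K1 K2)"
  unfolding CPD_kernel_def
proof (intro conjI allI)
  fix x y :: "'s1 + 's2"
  show "bounded_clinear_map (block_kernel K1 K2 x y)"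
    using K1 K2 bounded_clinear_map_zero unfolding CPD_kernel_def block_kernel_def[abs_def]
    by (cases x; cases y) auto
next
  fix n :: nat and s :: "nat \<Rightarrow> 's1 + 's2" and a b :: "nat \<Rightarrow> 'a"
  define b1 where "b1 i = (case s i of Inl _ \<Rightarrow> b i | Inr _ \<Rightarrow> 0)" for i
  define b2 where "b2 i = (case s i of Inl _ \<Rightarrow> 0 | Inr _ \<Rightarrow> b i)" for i
  define s1 where "s1 i = (case s i of Inl z \<Rightarrow> z | Inr _ \<Rightarrow> undefined)" for i
  define s2 where "s2 i = (case s i of Inl _ \<Rightarrow> undefined | Inr z \<Rightarrow> z)" for i
  have "cstar (b i) * block_kernel K1 K2 (s i) (s j) v * b j =
      cstar (b1 i) * K1 (s1 i) (s1 j) v * b1 j + cstar (b2 i) * K2 (s2 i) (s2 j) v * b2 j" for i j v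
    by (cases "s i"; cases "s j") (simp_all add: b1_def b2_def s1_def s2_def block_kernel_def)
  then have "(\<Sum>i<n. \<Sum>j<n. cstar (b i) * block_kernel K1 K2 (s i) (s j) (cstar (a i) * a j) * b j)
     = (\<Sum>i<n. \<Sum>j<n. cstar (b1 i) * K1 (s1 i) (s1 j) (cstar (a i) * a j) * b1 j)
      + (\<Sum>i<n. \<Sum>j<n. cstar (b2 i) * K2 (s2 i) (s2 j) (cstar (a i) * a j) * b2 j)"
    by (simp add: sum.distrib)
  then show "positive (\<Sum>i<n. \<Sum>j<n. cstar (b i) * block_kernel K1 K2 (s i) (s j) (cstar (a i) * a j) * b j)"
    using K1 K2 unfolding CPD_kernel_def by (simp add: positive_add)
qed

lemma CPD_semigroup_elem_kernel:
  assumes "\<forall>s. cont_semigroup (c s :: real \<Rightarrow> 'a::unital_cstar_algebra)"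
  shows "CPD_semigroup (elem_kernel c)"
  unfolding CPD_semigroup_def
proof (intro conjI allI impI)
  fix s s'
  show "elem_kernel c 0 s s' = id"
    using assms unfolding cont_semigroup_def by (simp add: elem_kernel_def fun_eq_iff)
next
  fix s s' and t u :: real
  assume "t \<ge> 0" "u \<ge> 0"
  then have "c z (t + u) = c z u * c z t" for z
    using assms unfolding cont_semigroup_def by (metis add.commute)
  then show "elem_kernel c (t + u) s s' = elem_kernel c t s s' \<circ> elem_kernel c u s s'"
    by (simp add: elem_kernel_def fun_eq_iff cstar_mult mult.assoc)
qed (rule CPD_kernel_elem_kernel)

section \<open>The sum of two CPD-semigroups\<close>

lemma boxplus_simps:
  "boxplus T1 T2 c1 c2 t (Inl s) (Inl s') = T1 t s s'"
  "boxplus T1 T2 c1 c2 t (Inr r) (Inr r') = T2 t r r'"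
  "boxplus T1 T2 c1 c2 t (Inl s) (Inr r) = elem_kernel (case_sum c1 c2) t (Inl s) (Inr r)"
  "boxplus T1 T2 c1 c2 t (Inr r) (Inl s) = elem_kernel (case_sum c1 c2) t (Inr r) (Inl s)"
  by (simp_all add: boxplus_def elem_kernel_def fun_eq_iff)

lemma boxplus_elem_kernel:
  "boxplus (elem_kernel c1) (elem_kernel c2) c1 c2 = elem_kernel (case_sum c1 c2)"
  by (simp add: fun_eq_iff boxplus_def elem_kernel_def split: sum.split)

lemma boxplus_diff_boxplus_elem_kernel:
  "(\<lambda>x y v. boxplus T1 T2 c1 c2 t x y v - boxplus (elem_kernel c1) (elem_kernel c2) c1 c2 t x y v)
    = block_kernel (\<lambda>s s' v. T1 t s s' v - elem_kernel c1 t s s' v)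
        (\<lambda>s s' v. T2 t s s' v - elem_kernel c2 t s s' v)"
  by (simp add: fun_eq_iff boxplus_def block_kernel_def elem_kernel_def split: sum.split)

lemma dominates_boxplus:
  assumes "dominates T1 (elem_kernel c1)" "dominates T2 (elem_kernel c2)"
  shows "dominates (boxplus T1 T2 c1 c2) (boxplus (elem_kernel c1) (elem_kernel c2) c1 c2)"
  using assms unfolding dominates_def boxplus_diff_boxplus_elem_kernel
  by (simp add: CPD_kernel_block_kernel)

lemma boxplus_entrywise_iff:
  assumes "\<And>x y. P (\<lambda>t. elem_kernel (case_sum c1 c2) t x y)"
  shows "(\<forall>x y. P (\<lambda>t. boxplus T1 T2 c1 c2 t x y))
    \<longleftrightarrow> (\<forall>s s'. P (\<lambda>t. T1 t s s')) \<and> (\<forall>r r'. P (\<lambda>t. T2 t r r'))"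
proof (intro iffI conjI allI)
  fix s s' assume "\<forall>x y. P (\<lambda>t. boxplus T1 T2 c1 c2 t x y)"
  from this[rule_format, of "Inl s" "Inl s'"] show "P (\<lambda>t. T1 t s s')"
    by (simp only: boxplus_simps)
next
  fix r r' assume "\<forall>x y. P (\<lambda>t. boxplus T1 T2 c1 c2 t x y)"
  from this[rule_format, of "Inr r" "Inr r'"] show "P (\<lambda>t. T2 t r r')"
    by (simp only: boxplus_simps)
next
  fix x y
  assume "(\<forall>s s'. P (\<lambda>t. T1 t s s')) \<and> (\<forall>r r'. P (\<lambda>t. T2 t r r'))"
  then show "P (\<lambda>t. boxplus T1 T2 c1 c2 t x y)"
    using assms by (cases x; cases y) (simp_all only: boxplus_simps)
qed
lemma CPD_semigroup_boxplus:
  fixes T1 :: "real \<Rightarrow> 's1 \<Rightarrow> 's1 \<Rightarrow> 'a::unital_cstar_algebra \<Rightarrow> 'a"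
  assumes "CPD_semigroup T1" "CPD_semigroup T2"
    and "dominates T1 (elem_kernel c1)" "dominates T2 (elem_kernel c2)"
    and c: "\<forall>x. cont_semigroup (case_sum c1 c2 x)"
  shows "CPD_semigroup (boxplus T1 T2 c1 c2)"
proof -
  let ?T = "boxplus T1 T2 c1 c2" and ?S = "boxplus (elem_kernel c1) (elem_kernel c2) c1 c2"
  have "CPD_kernel (?T t)" if "t \<ge> 0" for t
  proof -
    have "CPD_kernel (\<lambda>x y v. ?T t x y v - ?S t x y v)"
      using dominates_boxplus[OF assms(3,4)] that unfolding dominates_def by blast
    then have "CPD_kernel (\<lambda>x y v. ?S t x y v + (?T t x y v - ?S t x y v))"
      by (intro CPD_kernel_add) (simp_all add: boxplus_elem_kernel CPD_kernel_elem_kernel)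
    then show ?thesis by simp
  qed
  moreover
  let ?law = "\<lambda>F :: real \<Rightarrow> 'a \<Rightarrow> 'a. F 0 = id \<and>
    (\<forall>t u. t \<ge> 0 \<longrightarrow> u \<ge> 0 \<longrightarrow> F (t + u) = F t \<circ> F u)"
  have "?law (\<lambda>t. elem_kernel (case_sum c1 c2) t x y)" for x y
    using CPD_semigroup_elem_kernel[OF c] unfolding CPD_semigroup_def by blast
  moreover have "\<forall>s s'. ?law (\<lambda>t. T1 t s s')" "\<forall>r r'. ?law (\<lambda>t. T2 t r r')"
    using assms(1,2) unfolding CPD_semigroup_def by blast+
  ultimately show ?thesis
    unfolding CPD_semigroup_def using boxplus_entrywise_iff[of ?law c1 c2 T1 T2] by blast
qed

section \<open>Continuity\<close>

lemma onorm_sandwich_diff_le: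
  fixes x y x' y' :: "'a::unital_cstar_algebra"
  shows "onorm (\<lambda>v. cstar x * v * y - cstar x' * v * y')
    \<le> norm (x - x') * norm y + norm x' * norm (y - y')"
proof (rule onorm_bound)
  fix v
  have "cstar x * v * y - cstar x' * v * y' = cstar (x - x') * v * y + cstar x' * v * (y - y')"
    by (simp add: cstar_diff algebra_simps)
  then have "norm (cstar x * v * y - cstar x' * v * y')
      \<le> norm (x - x') * norm v * norm y + norm x' * norm v * norm (y - y')"
    using norm_triangle_ineq[of "cstar (x - x') * v * y" "cstar x' * v * (y - y')"]
      norm_sandwich[of "cstar (x - x')" v y] norm_sandwich[of "cstar x'" v "y - y'"]
    by simp
  then show "norm (cstar x * v * y - cstar x' * v * y')
      \<le> (norm (x - x') * norm y + norm x' * norm (y - y')) * norm v"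
    by (simp add: algebra_simps)
qed simp

lemma uniformly_continuous_sg_elem_kernel:
  assumes "\<forall>s. cont_semigroup (c s :: real \<Rightarrow> 'a::unital_cstar_algebra)"
  shows "uniformly_continuous_sg (elem_kernel c)"
  unfolding uniformly_continuous_sg_def
proof (intro allI impI)
  fix s s' and t0 :: real
  assume "t0 \<ge> 0"
  then have lim: "(c z \<longlongrightarrow> c z t0) (at t0 within {0..})" for z
    using assms unfolding cont_semigroup_def continuous_on_def by auto
  define K where "K t = norm (c s t - c s t0) * norm (c s' t) + norm (c s t0) * norm (c s' t - c s' t0)"
    for t
  have "(K \<longlongrightarrow> 0 * norm (c s' t0) + norm (c s t0) * 0) (at t0 within {0..})"
    unfolding K_def using lim
    by (intro tendsto_add tendsto_mult tendsto_norm tendsto_const tendsto_norm_zero LIM_zero)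
  then have K0: "(K \<longlongrightarrow> 0) (at t0 within {0..})" by simp
  have "norm (onorm (\<lambda>b. elem_kernel c t s s' b - elem_kernel c t0 s s' b)) \<le> K t" for t
  proof -
    have "bounded_linear (\<lambda>b. elem_kernel c t s s' b - elem_kernel c t0 s s' b)"
      unfolding elem_kernel_def by (intro bounded_linear_sub bounded_linear_sandwich)
    then have "0 \<le> onorm (\<lambda>b. elem_kernel c t s s' b - elem_kernel c t0 s s' b)"
      by (rule onorm_pos_le)
    moreover have "onorm (\<lambda>b. elem_kernel c t s s' b - elem_kernel c t0 s s' b) \<le> K t"
      unfolding K_def elem_kernel_def by (rule onorm_sandwich_diff_le)
    ultimately show ?thesis by simp
  qed
  then show "((\<lambda>t. onorm (\<lambda>b. elem_kernel c t s s' b - elem_kernel c t0 s s' b)) \<longlongrightarrow> 0)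
      (at t0 within {0..})"
    by (intro Lim_null_comparison[OF _ K0] always_eventually allI)
qed

lemma strongly_continuous_elem_kernel:
  assumes "\<forall>s. cont_semigroup (c s :: real \<Rightarrow> 'a::unital_cstar_algebra)"
  shows "strongly_continuous (elem_kernel c)"
  unfolding strongly_continuous_def elem_kernel_def
proof (intro allI)
  fix s s' b
  have "continuous_on {0..} (c s)" "continuous_on {0..} (c s')"
    using assms unfolding cont_semigroup_def by auto
  then show "continuous_on {0..} (\<lambda>t. cstar (c s t) * b * c s' t)"
    by (intro continuous_on_mult continuous_on_const bounded_linear.continuous_on[OF bounded_linear_cstar])
qed

lemma uniformly_continuous_sg_boxplus_iff:
  assumes "\<forall>x. cont_semigroup (case_sum c1 c2 x)"
  shows "uniformly_continuous_sg (boxplus T1 T2 c1 c2)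
    \<longleftrightarrow> uniformly_continuous_sg T1 \<and> uniformly_continuous_sg T2"
proof -
  have "\<forall>t0\<ge>0. ((\<lambda>t. onorm (\<lambda>b. elem_kernel (case_sum c1 c2) t x y b
      - elem_kernel (case_sum c1 c2) t0 x y b)) \<longlongrightarrow> 0) (at t0 within {0..})" for x y
    using uniformly_continuous_sg_elem_kernel[OF assms] unfolding uniformly_continuous_sg_def by blast
  then show ?thesis
    unfolding uniformly_continuous_sg_def
    by (rule boxplus_entrywise_iff[where P = "\<lambda>F. \<forall>t0\<ge>0.
      ((\<lambda>t. onorm (\<lambda>b. F t b - F t0 b)) \<longlongrightarrow> 0) (at t0 within {0..})"])
qed

lemma strongly_continuous_boxplus_iff:
  assumes "\<forall>x. cont_semigroup (case_sum c1 c2 x)"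
  shows "strongly_continuous (boxplus T1 T2 c1 c2)
    \<longleftrightarrow> strongly_continuous T1 \<and> strongly_continuous T2"
proof -
  have "\<forall>b. continuous_on {0..} (\<lambda>t. elem_kernel (case_sum c1 c2) t x y b)" for x y
    using strongly_continuous_elem_kernel[OF assms] unfolding strongly_continuous_def by blast
  then show ?thesis
    unfolding strongly_continuous_def
    by (rule boxplus_entrywise_iff[where P = "\<lambda>F. \<forall>b. continuous_on {0..} (\<lambda>t. F t b)"])
qed

theorem theorem3p1:
  fixes T1 :: "real \<Rightarrow> 's1 \<Rightarrow> 's1 \<Rightarrow> 'a::unital_cstar_algebra \<Rightarrow> 'a"
    and T2 :: "real \<Rightarrow> 's2 \<Rightarrow> 's2 \<Rightarrow> 'a \<Rightarrow> 'a"
    and c1 :: "'s1 \<Rightarrow> real \<Rightarrow> 'a"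
    and c2 :: "'s2 \<Rightarrow> real \<Rightarrow> 'a"
  assumes T1: "spatial T1" and T2: "spatial T2"
    and c1: "\<forall>s. cont_semigroup (c1 s)" and c2: "\<forall>s. cont_semigroup (c2 s)"
    and unit1: "is_CPD_unit T1 (elem_kernel c1)"
    and unit2: "is_CPD_unit T2 (elem_kernel c2)"
  shows "spatial (boxplus T1 T2 c1 c2)
    \<and> is_CPD_unit (boxplus T1 T2 c1 c2) (boxplus (elem_kernel c1) (elem_kernel c2) c1 c2)
    \<and> (uniformly_continuous_sg (boxplus T1 T2 c1 c2) \<longleftrightarrow>
         uniformly_continuous_sg T1 \<and> uniformly_continuous_sg T2)
    \<and> (strongly_continuous (boxplus T1 T2 c1 c2) \<longleftrightarrow>
         strongly_continuous T1 \<and> strongly_continuous T2)"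
proof -
  have c: "\<forall>x. cont_semigroup (case_sum c1 c2 x)" using c1 c2 by (simp split: sum.split)
  have dom1: "dominates T1 (elem_kernel c1)" and dom2: "dominates T2 (elem_kernel c2)"
    using unit1 unit2 unfolding is_CPD_unit_def by blast+
  have "elementary (boxplus (elem_kernel c1) (elem_kernel c2) c1 c2)"
    unfolding elementary_def boxplus_elem_kernel using CPD_semigroup_elem_kernel[OF c] c by blast
  then have unit: "is_CPD_unit (boxplus T1 T2 c1 c2) (boxplus (elem_kernel c1) (elem_kernel c2) c1 c2)"
    unfolding is_CPD_unit_def using dominates_boxplus[OF dom1 dom2] by blast
  have "CPD_semigroup (boxplus T1 T2 c1 c2)"
    using T1 T2 dom1 dom2 c unfolding spatial_def by (blast intro: CPD_semigroup_boxplus)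
  then show ?thesis
    using unit uniformly_continuous_sg_boxplus_iff[OF c] strongly_continuous_boxplus_iff[OF c]
    unfolding spatial_def by blast
qed

end
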